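(* Let $\Lambda\subset[0,+\infty)$ be a decreasing gap asymptotically dense set and let $f:\mathbb{R}\to[0,+\infty)$ be continuous. If $x$ is an interior point of $C(f,\Lambda)$, then \[ \mu\big([x,+\infty)\cap D(f,\Lambda)\big)=0 . \]
   Context: $\mu$ denotes one-dimensional Lebesgue measure. For a discrete set $\Lambda\subset[0,\infty)$ and $f:\mathbb{R}\to[0,+\infty)$, put $s(x)=\sum_{\lambda\in\Lambda}f(x+\lambda)$, $C(f,\Lambda)=\{x: s(x)<\infty\}$ and $D(f,\Lambda)=\{x: s(x)=\infty\}$. An unbounded infinite discrete set $\Lambda=\{\lambda_1<\lambda_2<\cdots\}$ is a decreasing gap asymptotically dense set if the gaps $d_n=\lambda_n-\lambda_{n-1}$ tend to $0$ monotone decreasingly. *)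

theory Defs
  imports "HOL-Analysis.Analysis"
begin

definition dgad_set :: "real set \<Rightarrow> bool" where
  "dgad_set \<Lambda> \<longleftrightarrow> (\<exists>lam :: nat \<Rightarrow> real.
      strict_mono lam \<and> \<Lambda> = range lam \<and> (\<forall>n. 0 \<le> lam n) \<and> \<not> bdd_above \<Lambda> \<and>
      decseq (\<lambda>n. lam (Suc n) - lam n) \<and> (\<lambda>n. lam (Suc n) - lam n) \<longlonglongrightarrow> 0)"

definition ssum :: "(real \<Rightarrow> real) \<Rightarrow> real set \<Rightarrow> real \<Rightarrow> ennreal" where
  "ssum f \<Lambda> x = (\<Sum>\<^sub>\<infinity>l\<in>\<Lambda>. ennreal (f (x + l)))"

definition Cset :: "(real \<Rightarrow> real) \<Rightarrow> real set \<Rightarrow> real set" where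
  "Cset f \<Lambda> = {x. ssum f \<Lambda> x < \<infinity>}"

definition Dset :: "(real \<Rightarrow> real) \<Rightarrow> real set \<Rightarrow> real set" where
  "Dset f \<Lambda> = {x. ssum f \<Lambda> x = \<infinity>}"

end

theory Submission
  imports Defs
begin

text \<open>Let \<open>S t = \<Sum>\<^sub>n f (t + \<lambda>\<^sub>n)\<close>. As a sum of continuous nonnegative functions, \<open>S\<close> has
  closed sublevel sets, so by Baire's theorem it is bounded on an interval \<open>[a, a + L]\<close> inside the
  neighbourhood of \<open>x\<close> where it is finite. Hence the masses of \<open>f\<close> on the windows
  \<open>[a + \<lambda>\<^sub>n, a + \<lambda>\<^sub>n + L]\<close> have a finite sum. For \<open>y \<ge> a\<close>, choose \<open>m\<close> with
  \<open>\<lambda>\<^sub>m \<le> \<lambda>\<^sub>n + (y - a) < \<lambda>\<^sub>m\<^sub>+\<^sub>1\<close>; once the gaps are below \<open>L\<close>, the window at \<open>y + \<lambda>\<^sub>n\<close> lies in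
  the union of the windows at \<open>a + \<lambda>\<^sub>m\<close> and \<open>a + \<lambda>\<^sub>m\<^sub>+\<^sub>1\<close>. Because the gaps decrease, \<open>m\<close> is
  strictly increasing in \<open>n\<close>, so the window masses at \<open>y\<close> also have a finite sum, i.e.
  \<open>S\<close> is integrable on \<open>[y, y + L]\<close>. Thus \<open>S < \<infinity>\<close> almost everywhere on each such interval,
  and countably many of them cover \<open>[a, \<infinity>)\<close>.\<close>

lemma ssum_eq_suminf:
  assumes "inj lam" "\<Lambda> = range lam"
  shows "ssum f \<Lambda> t = (\<Sum>n. ennreal (f (t + lam n)))"
proof -
  let ?g = "\<lambda>n. ennreal (f (t + lam n))"
  have "ssum f \<Lambda> t = infsum ?g UNIV"
    unfolding ssum_def assms(2) using infsum_reindex[OF assms(1)] by (simp add: o_def)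
  also have "\<dots> = (\<Sum>n. ?g n)"
    by (intro sums_unique has_sum_imp_sums has_sum_infsum nonneg_summable_on_complete) simp
  finally show ?thesis .
qed

lemma suminf_comp_strict_mono_le:
  fixes G :: "nat \<Rightarrow> ennreal"
  assumes "strict_mono \<mu>"
  shows "(\<Sum>n. G (\<mu> n)) \<le> (\<Sum>n. G n)"
proof -
  have "(\<Sum>n<N. G (\<mu> n)) \<le> (\<Sum>n<\<mu> N. G n)" for N
  proof -
    have "(\<Sum>n<N. G (\<mu> n)) = sum G (\<mu> ` {..<N})"
      using assms by (simp add: sum.reindex strict_mono_imp_inj_on inj_on_subset)
    also have "\<dots> \<le> sum G {..<\<mu> N}"
      using assms by (intro sum_mono2) (auto simp: strict_mono_less)
    finally show ?thesis .
  qed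
  then have "(SUP N. \<Sum>n<N. G (\<mu> n)) \<le> (SUP N. \<Sum>n<N. G n)"
    by (meson SUP_least SUP_upper2 UNIV_I)
  then show ?thesis by (simp add: suminf_eq_SUP)
qed

lemma suminf_less_top_if_eventually_le:
  fixes G H :: "nat \<Rightarrow> ennreal"
  assumes "\<And>n. G n < \<infinity>" "eventually (\<lambda>n. G n \<le> H n) sequentially" "(\<Sum>n. H n) < \<infinity>"
  shows "(\<Sum>n. G n) < \<infinity>"
proof -
  obtain N where N: "\<And>n. N \<le> n \<Longrightarrow> G n \<le> H n"
    using assms(2) unfolding eventually_sequentially by blast
  define P where "P n = (if n < N then G n else 0)" for n
  have P: "(\<Sum>n. P n) = (\<Sum>n<N. P n)"
    by (rule suminf_finite) (auto simp: P_def)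
  have "(\<Sum>n. G n) \<le> (\<Sum>n. P n + H n)"
    by (intro suminf_le) (auto simp: P_def N not_less)
  also have "\<dots> = (\<Sum>n. P n) + (\<Sum>n. H n)"
    by (simp add: suminf_add)
  also have "\<dots> < \<infinity>"
    using assms(1,3) P by (simp add: P_def ennreal_sum_less_top ennreal_add_less_top)
  finally show ?thesis .
qed

lemma closed_suminf_sublevel:
  fixes g :: "nat \<Rightarrow> 'a::topological_space \<Rightarrow> real"
  assumes "\<And>n. continuous_on UNIV (g n)" "\<And>n t. 0 \<le> g n t"
  shows "closed {t. (\<Sum>n. ennreal (g n t)) \<le> c}"
proof (cases c)
  case (real K)
  have "(\<Sum>n. ennreal (g n t)) \<le> ennreal K \<longleftrightarrow> (\<forall>N. (\<Sum>n<N. g n t) \<le> K)" for t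
  proof -
    have "(\<Sum>n. ennreal (g n t)) = (SUP N. ennreal (\<Sum>n<N. g n t))"
      using assms(2) by (simp add: suminf_eq_SUP sum_ennreal)
    then show ?thesis
      using assms(2) \<open>0 \<le> K\<close> by (simp add: SUP_le_iff ennreal_le_iff sum_nonneg)
  qed
  then have "{t. (\<Sum>n. ennreal (g n t)) \<le> c} = (\<Inter>N. {t. (\<Sum>n<N. g n t) \<le> K})"
    using real by auto
  then show ?thesis
    by (auto intro!: closed_INT closed_Collect_le continuous_on_sum assms(1))
qed simp

lemma Baire_closed_cover_interval:
  fixes F :: "nat \<Rightarrow> real set"
  assumes closed: "\<And>K. closed (F K)" and cover: "{c..d} \<subseteq> (\<Union>K. F K)" and "c < d"
  obtains K a b where "a < b" "{a..b} \<subseteq> F K" "{a..b} \<subseteq> {c..d}"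
proof -
  let ?X = "top_of_set {c..d}"
  let ?G = "range (\<lambda>K. {c..d} \<inter> F K)"
  have complete: "completely_metrizable_space ?X"
    using completely_metrizable_space_cbox[of c d] by simp
  have "\<exists>T\<in>?G. ?X interior_of T \<noteq> {}"
  proof (rule ccontr)
    assume "\<not> ?thesis"
    then have "?X interior_of \<Union>?G = {}"
      by (intro Baire_category_alt)
         (auto intro!: closedin_closed_Int closed simp: complete)
    moreover have "\<Union>?G = {c..d}" using cover by auto
    ultimately show False using interior_of_topspace[of ?X] \<open>c < d\<close> by auto
  qed
  then obtain K z where "z \<in> ?X interior_of ({c..d} \<inter> F K)" by blast
  then obtain V where V: "open V" "z \<in> V" "z \<in> {c..d}" "{c..d} \<inter> V \<subseteq> F K"
    unfolding interior_of_def openin_open by blast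
  then obtain e where e: "e > 0" "ball z e \<subseteq> V" using open_contains_ball by blast
  define a where "a = max c (z - e/2)"
  define b where "b = min d (z + e/2)"
  have "a < b" using V e \<open>c < d\<close> unfolding a_def b_def by auto
  moreover have sub: "{a..b} \<subseteq> {c..d} \<inter> ball z e"
    using e unfolding a_def b_def by (auto simp: dist_real_def)
  moreover have "{a..b} \<subseteq> F K" using sub V(4) e(2) by blast
  ultimately show ?thesis by (intro that) auto
qed

lemma bounded_on_subinterval_if_closed_sublevels:
  fixes S :: "real \<Rightarrow> ennreal"
  assumes "\<And>K::nat. closed {t. S t \<le> of_nat K}" "\<And>t. t \<in> {c..d} \<Longrightarrow> S t < \<infinity>" "c < d"
  obtains a b K where "a < b" "{a..b} \<subseteq> {c..d}" "\<And>t. t \<in> {a..b} \<Longrightarrow> S t \<le> of_nat K"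
proof -
  have "{c..d} \<subseteq> (\<Union>K::nat. {t. S t \<le> of_nat K})"
  proof
    fix t assume "t \<in> {c..d}"
    then obtain K where "S t < of_nat K"
      using ennreal_Ex_less_of_nat assms(2) unfolding infinity_ennreal_def by blast
    then show "t \<in> (\<Union>K::nat. {t. S t \<le> of_nat K})" by (auto intro: less_imp_le)
  qed
  then obtain K a b where "a < b" "{a..b} \<subseteq> {t. S t \<le> of_nat K}" "{a..b} \<subseteq> {c..d}"
    by (rule Baire_closed_cover_interval[OF assms(1) _ assms(3)])
  then show ?thesis by (intro that[of a b K]) auto
qed

lemma strict_mono_unbounded_bracket:
  fixes lam :: "nat \<Rightarrow> real"
  assumes "strict_mono lam" "\<not> bdd_above (range lam)" "lam 0 \<le> v"
  obtains m where "lam m \<le> v" "v < lam (Suc m)"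
proof -
  obtain k where "v < lam k" using assms(2) by (meson bdd_above.I2 linorder_not_le)
  then have "\<exists>k. v < lam k \<and> (\<forall>j<k. \<not> v < lam j)"
    using exists_least_iff[of "\<lambda>k. v < lam k"] by blast
  then obtain k where k: "v < lam k" "\<And>j. j < k \<Longrightarrow> lam j \<le> v" by (auto simp: not_less)
  with assms(3) obtain m where "k = Suc m" by (cases k) auto
  then show ?thesis using that[of m] k(1) k(2)[of m] by simp
qed

lemma decreasing_gaps_shift_index:
  fixes lam :: "nat \<Rightarrow> real"
  assumes mono: "strict_mono lam" and unbounded: "\<not> bdd_above (range lam)"
    and gaps: "decseq (\<lambda>n. lam (Suc n) - lam n)" and "0 \<le> h"
  obtains \<mu> where "strict_mono \<mu>" "\<And>n. lam (\<mu> n) \<le> lam n + h" "\<And>n. lam n + h < lam (Suc (\<mu> n))"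
proof -
  have "\<exists>m. lam m \<le> lam n + h \<and> lam n + h < lam (Suc m)" for n
  proof -
    have "lam 0 \<le> lam n + h"
      using mono \<open>0 \<le> h\<close> by (simp add: strict_mono_less_eq add_increasing2)
    then show ?thesis using strict_mono_unbounded_bracket[OF mono unbounded] by blast
  qed
  then obtain \<mu> where \<mu>: "\<And>n. lam (\<mu> n) \<le> lam n + h" "\<And>n. lam n + h < lam (Suc (\<mu> n))"
    by metis
  have "strict_mono \<mu>"
  proof (rule strict_monoI_Suc)
    fix n
    have "lam n < lam (Suc (\<mu> n))" using \<mu>(2)[of n] \<open>0 \<le> h\<close> by simp
    then have "n \<le> \<mu> n" using mono strict_mono_less by fastforce
    then have "lam (Suc (\<mu> n)) - lam (\<mu> n) \<le> lam (Suc n) - lam n"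
      using gaps unfolding decseq_def by blast
    then have "lam (Suc (\<mu> n)) < lam (Suc (\<mu> (Suc n)))" using \<mu>(1)[of n] \<mu>(2)[of "Suc n"] by simp
    then show "\<mu> n < \<mu> (Suc n)" using mono strict_mono_less by blast
  qed
  then show ?thesis using that \<mu> by blast
qed

definition interval_mass :: "(real \<Rightarrow> real) \<Rightarrow> real \<Rightarrow> real \<Rightarrow> ennreal" where
  "interval_mass f p q = (\<integral>\<^sup>+u. indicator {p..q} u * ennreal (f u) \<partial>lborel)"

lemma interval_mass_finite:
  assumes "continuous_on UNIV f"
  shows "interval_mass f p q < \<infinity>"
proof -
  obtain M where M: "\<And>u. u \<in> {p..q} \<Longrightarrow> f u \<le> M"
    using compact_attains_sup[of "f ` {p..q}"] compact_continuous_image[of "{p..q}" f]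
      continuous_on_subset[OF assms] by (cases "p \<le> q") fastforce+
  have "interval_mass f p q \<le> (\<integral>\<^sup>+u. ennreal M * indicator {p..q} u \<partial>lborel)"
    unfolding interval_mass_def
    by (intro nn_integral_mono) (auto simp: indicator_def intro!: ennreal_leI M)
  also have "\<dots> = ennreal M * emeasure lborel {p..q}"
    by (simp add: nn_integral_cmult_indicator)
  also have "\<dots> < \<infinity>" by (cases "p \<le> q") (auto simp: ennreal_mult_less_top)
  finally show ?thesis .
qed

lemma interval_mass_mono:
  assumes "{p..q} \<subseteq> {p'..q'}"
  shows "interval_mass f p q \<le> interval_mass f p' q'"
  unfolding interval_mass_def using assms
  by (intro nn_integral_mono) (auto simp: indicator_def)

lemma interval_mass_le_add:
  assumes [measurable]: "f \<in> borel_measurable borel" and "\<alpha> \<le> \<beta>" "\<beta> \<le> \<alpha> + L"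
  shows "interval_mass f \<alpha> (\<beta> + L) \<le> interval_mass f \<alpha> (\<alpha> + L) + interval_mass f \<beta> (\<beta> + L)"
proof -
  have "interval_mass f \<alpha> (\<beta> + L) \<le>
      (\<integral>\<^sup>+u. indicator {\<alpha>..\<alpha>+L} u * ennreal (f u) + indicator {\<beta>..\<beta>+L} u * ennreal (f u) \<partial>lborel)"
    unfolding interval_mass_def using assms
    by (intro nn_integral_mono) (auto simp: indicator_def)
  also have "\<dots> = interval_mass f \<alpha> (\<alpha> + L) + interval_mass f \<beta> (\<beta> + L)"
    unfolding interval_mass_def by (rule nn_integral_add) auto
  finally show ?thesis .
qed

lemma interval_mass_translate:
  assumes [measurable]: "f \<in> borel_measurable borel"
  shows "(\<integral>\<^sup>+t. indicator {c..c+L} t * ennreal (f (t + l)) \<partial>lborel) = interval_mass f (c+l) (c+l+L)"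
proof -
  have "interval_mass f (c+l) (c+l+L) =
      (\<integral>\<^sup>+t. indicator {c+l..c+l+L} (l + 1 * t) * ennreal (f (l + 1 * t)) \<partial>lborel)"
    unfolding interval_mass_def
    using nn_integral_real_affine[of "\<lambda>u. indicator {c+l..c+l+L} u * ennreal (f u)" 1 l] by simp
  also have "\<dots> = (\<integral>\<^sup>+t. indicator {c..c+L} t * ennreal (f (t + l)) \<partial>lborel)"
    by (intro nn_integral_cong) (auto simp: indicator_def add.commute)
  finally show ?thesis by simp
qed

lemma nn_integral_window_suminf:
  assumes [measurable]: "f \<in> borel_measurable borel"
  shows "(\<integral>\<^sup>+t. indicator {c..c+L} t * (\<Sum>n. ennreal (f (t + lam n))) \<partial>lborel)
       = (\<Sum>n. interval_mass f (c + lam n) (c + lam n + L))"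
proof -
  have "(\<integral>\<^sup>+t. indicator {c..c+L} t * (\<Sum>n. ennreal (f (t + lam n))) \<partial>lborel)
     = (\<Sum>n. \<integral>\<^sup>+t. indicator {c..c+L} t * ennreal (f (t + lam n)) \<partial>lborel)"
    by (subst nn_integral_suminf[symmetric]) auto
  then show ?thesis using interval_mass_translate[OF assms] by simp
qed

lemma window_masses_finite_shift:
  fixes lam :: "nat \<Rightarrow> real"
  assumes mono: "strict_mono lam" and unbounded: "\<not> bdd_above (range lam)"
    and gaps: "decseq (\<lambda>n. lam (Suc n) - lam n)" "(\<lambda>n. lam (Suc n) - lam n) \<longlonglongrightarrow> 0"
    and "0 < L" "a \<le> y" and f: "continuous_on UNIV f"
    and finite: "(\<Sum>n. interval_mass f (a + lam n) (a + lam n + L)) < \<infinity>"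
  shows "(\<Sum>n. interval_mass f (y + lam n) (y + lam n + L)) < \<infinity>"
proof -
  define G where "G m = interval_mass f (a + lam m) (a + lam m + L)" for m
  obtain \<mu> where \<mu>: "strict_mono \<mu>" "\<And>n. lam (\<mu> n) \<le> lam n + (y - a)"
      "\<And>n. lam n + (y - a) < lam (Suc (\<mu> n))"
    using decreasing_gaps_shift_index[OF mono unbounded gaps(1), of "y - a"] \<open>a \<le> y\<close> by auto
  have "eventually (\<lambda>n. lam (Suc n) - lam n \<le> L) sequentially"
    using order_tendstoD(2)[OF gaps(2) \<open>0 < L\<close>] by (auto elim: eventually_mono)
  then have "eventually (\<lambda>n. lam (Suc (\<mu> n)) - lam (\<mu> n) \<le> L) sequentially"
    using filterlim_subseq[OF \<mu>(1)] by (rule eventually_compose_filterlim)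
  then have "eventually (\<lambda>n. interval_mass f (y + lam n) (y + lam n + L) \<le> G (\<mu> n) + G (Suc (\<mu> n)))
      sequentially"
  proof (rule eventually_mono)
    fix n assume gap: "lam (Suc (\<mu> n)) - lam (\<mu> n) \<le> L"
    have "interval_mass f (y + lam n) (y + lam n + L) \<le>
        interval_mass f (a + lam (\<mu> n)) (a + lam (Suc (\<mu> n)) + L)"
      using \<mu>(2,3)[of n] by (intro interval_mass_mono) auto
    also have "\<dots> \<le> G (\<mu> n) + G (Suc (\<mu> n))"
      unfolding G_def using gap mono borel_measurable_continuous_onI[OF f]
      by (intro interval_mass_le_add) (auto simp: strict_mono_less_eq)
    finally show "interval_mass f (y + lam n) (y + lam n + L) \<le> G (\<mu> n) + G (Suc (\<mu> n))" .
  qed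
  moreover have "(\<Sum>n. G (\<mu> n) + G (Suc (\<mu> n))) < \<infinity>"
  proof -
    have "strict_mono (\<lambda>n. Suc (\<mu> n))" using \<mu>(1) by (simp add: strict_mono_def)
    then have "(\<Sum>n. G (\<mu> n)) < \<infinity>" "(\<Sum>n. G (Suc (\<mu> n))) < \<infinity>"
      using suminf_comp_strict_mono_le[of _ G] \<mu>(1) finite unfolding G_def
      by (auto intro: order.strict_trans1)
    then show ?thesis by (simp add: suminf_add[symmetric] ennreal_add_less_top)
  qed
  ultimately show ?thesis
    by (intro suminf_less_top_if_eventually_le[OF interval_mass_finite[OF f]])
qed

lemma null_sets_infinite_if_nn_integral_finite:
  assumes [measurable]: "S \<in> borel_measurable M" "A \<in> sets M"
    and "(\<integral>\<^sup>+t. indicator A t * S t \<partial>M) < \<infinity>"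
  shows "{t \<in> A. S t = \<infinity>} \<in> null_sets M"
proof -
  have "AE t in M. indicator A t * S t \<noteq> \<infinity>"
    using assms(3) by (intro nn_integral_PInf_AE) auto
  then have "{t \<in> space M. indicator A t * S t = \<infinity>} \<in> null_sets M"
    by (subst (asm) AE_iff_null) auto
  moreover have "{t \<in> space M. indicator A t * S t = \<infinity>} = {t \<in> A. S t = \<infinity>}"
    using sets.sets_into_space[OF assms(2)] by (auto simp: indicator_def)
  ultimately show ?thesis by simp
qed

lemma null_sets_halfline_if_null_windows:
  fixes L :: real
  assumes "0 < L" and null: "\<And>y. a \<le> y \<Longrightarrow> {t \<in> {y..y+L}. P t} \<in> null_sets lborel"
  shows "{t. a \<le> t \<and> P t} \<in> null_sets lebesgue"
proof -
  have "{t. a \<le> t \<and> P t} \<subseteq> (\<Union>k::nat. {t \<in> {a + k * L..a + k * L + L}. P t})"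
  proof
    fix t assume "t \<in> {t. a \<le> t \<and> P t}"
    then have "a \<le> t" "P t" by auto
    define k where "k = nat \<lfloor>(t - a) / L\<rfloor>"
    have "real k = of_int \<lfloor>(t - a) / L\<rfloor>"
      unfolding k_def using \<open>a \<le> t\<close> \<open>0 < L\<close> by simp
    then have "real k \<le> (t - a) / L" "(t - a) / L < real k + 1"
      by linarith+
    then have "a + k * L \<le> t" "t \<le> a + k * L + L"
      using \<open>0 < L\<close> by (simp_all add: field_simps)
    then show "t \<in> (\<Union>k::nat. {t \<in> {a + k * L..a + k * L + L}. P t})" using \<open>P t\<close> by auto
  qed
  moreover have "(\<Union>k::nat. {t \<in> {a + k * L..a + k * L + L}. P t}) \<in> null_sets lborel"
    using \<open>0 < L\<close> by (intro null_sets_UN null) simp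
  ultimately show ?thesis by (meson null_sets_completionI null_sets_completion_subset)
qed

lemma window_masses_finite_if_bounded:
  assumes [measurable]: "f \<in> borel_measurable borel"
    and bound: "\<And>t. t \<in> {a..b} \<Longrightarrow> (\<Sum>n. ennreal (f (t + lam n))) \<le> B" and "B < \<infinity>"
  shows "(\<Sum>n. interval_mass f (a + lam n) (a + lam n + (b - a))) < \<infinity>"
proof -
  have "(\<Sum>n. interval_mass f (a + lam n) (a + lam n + (b - a))) =
      (\<integral>\<^sup>+t. indicator {a..b} t * (\<Sum>n. ennreal (f (t + lam n))) \<partial>lborel)"
    using nn_integral_window_suminf[OF assms(1), of a "b - a" lam] by simp
  also have "\<dots> \<le> (\<integral>\<^sup>+t. B * indicator {a..b} t \<partial>lborel)"
    using bound by (intro nn_integral_mono) (auto simp: indicator_def)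
  also have "\<dots> < \<infinity>"
    using \<open>B < \<infinity>\<close> by (cases "a \<le> b") (auto simp: nn_integral_cmult_indicator ennreal_mult_less_top)
  finally show ?thesis .
qed

lemma null_sets_shift_sum_infinite:
  fixes lam :: "nat \<Rightarrow> real"
  assumes mono: "strict_mono lam" and unbounded: "\<not> bdd_above (range lam)"
    and gaps: "decseq (\<lambda>n. lam (Suc n) - lam n)" "(\<lambda>n. lam (Suc n) - lam n) \<longlonglongrightarrow> 0"
    and "0 < L" and f: "continuous_on UNIV f"
    and finite: "(\<Sum>n. interval_mass f (a + lam n) (a + lam n + L)) < \<infinity>"
  shows "{t. a \<le> t \<and> (\<Sum>n. ennreal (f (t + lam n))) = \<infinity>} \<in> null_sets lebesgue"
proof (rule null_sets_halfline_if_null_windows[OF \<open>0 < L\<close>])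
  fix y assume "a \<le> y"
  have f_meas [measurable]: "f \<in> borel_measurable borel"
    using f by (rule borel_measurable_continuous_onI)
  show "{t \<in> {y..y+L}. (\<Sum>n. ennreal (f (t + lam n))) = \<infinity>} \<in> null_sets lborel"
  proof (rule null_sets_infinite_if_nn_integral_finite)
    show "(\<integral>\<^sup>+t. indicator {y..y+L} t * (\<Sum>n. ennreal (f (t + lam n))) \<partial>lborel) < \<infinity>"
      unfolding nn_integral_window_suminf[OF f_meas]
      by (rule window_masses_finite_shift[OF mono unbounded gaps \<open>0 < L\<close> \<open>a \<le> y\<close> f finite])
  qed auto
qed

theorem theorem3p4:
  fixes \<Lambda> :: "real set" and f :: "real \<Rightarrow> real" and x :: real
  assumes "dgad_set \<Lambda>"
    and "continuous_on UNIV f"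
    and "\<And>t. 0 \<le> f t"
    and "x \<in> interior (Cset f \<Lambda>)"
  shows "{x..} \<inter> Dset f \<Lambda> \<in> null_sets lebesgue"
proof -
  obtain lam where mono: "strict_mono lam" and \<Lambda>: "\<Lambda> = range lam"
    and unbounded: "\<not> bdd_above (range lam)"
    and gaps: "decseq (\<lambda>n. lam (Suc n) - lam n)" "(\<lambda>n. lam (Suc n) - lam n) \<longlonglongrightarrow> 0"
    using assms(1) unfolding dgad_set_def by metis
  define S where "S t = (\<Sum>n. ennreal (f (t + lam n)))" for t
  have ssum: "ssum f \<Lambda> = S"
    using ssum_eq_suminf[OF strict_mono_imp_inj_on[OF mono] \<Lambda>] unfolding S_def by blast
  obtain \<delta> where "\<delta> > 0" "ball x \<delta> \<subseteq> {t. S t < \<infinity>}"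
    using assms(4) unfolding Cset_def ssum mem_interior by blast
  then have finite_near_x: "S t < \<infinity>" if "t \<in> {x..x + \<delta>/2}" for t
    using that by (auto simp: subset_eq dist_real_def)
  have "continuous_on UNIV (\<lambda>t. f (t + lam n))" for n
    by (intro continuous_on_compose2[OF assms(2)] continuous_intros) auto
  then have closed: "closed {t. S t \<le> of_nat K}" for K :: nat
    unfolding S_def using assms(3) by (rule closed_suminf_sublevel)
  have "x < x + \<delta>/2" using \<open>\<delta> > 0\<close> by simp
  then obtain a b K where "a < b" "{a..b} \<subseteq> {x..x + \<delta>/2}"
    and K: "\<And>t. t \<in> {a..b} \<Longrightarrow> S t \<le> of_nat K"
    using bounded_on_subinterval_if_closed_sublevels[OF closed finite_near_x] by blast
  have "(\<Sum>n. interval_mass f (a + lam n) (a + lam n + (b - a))) < \<infinity>"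
    using K of_nat_less_top unfolding S_def
    by (intro window_masses_finite_if_bounded borel_measurable_continuous_onI[OF assms(2)]) auto
  then have "{t. a \<le> t \<and> S t = \<infinity>} \<in> null_sets lebesgue"
    unfolding S_def using \<open>a < b\<close>
    by (intro null_sets_shift_sum_infinite[OF mono unbounded gaps _ assms(2), of "b - a"]) auto
  moreover have "{x..} \<inter> Dset f \<Lambda> \<subseteq> {t. a \<le> t \<and> S t = \<infinity>}"
  proof
    fix t assume "t \<in> {x..} \<inter> Dset f \<Lambda>"
    then have "x \<le> t" "S t = \<infinity>" unfolding Dset_def ssum by auto
    then show "t \<in> {t. a \<le> t \<and> S t = \<infinity>}"
      using finite_near_x[of t] \<open>a < b\<close> \<open>{a..b} \<subseteq> {x..x + \<delta>/2}\<close> by (cases "a \<le> t") auto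
  qed
  ultimately show ?thesis by (rule null_sets_completion_subset[rotated])
qed

end
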